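(* Let $f:\mathbb{R}^d\to\mathbb{R}$ be twice continuously differentiable with $\nabla f$ Lipschitz continuous with constant $\kappa_{Lg}>0$. Fix $\bm{x}_0\in\mathbb{R}^d$, $\Delta>0$, the coordinate design set $\bm{x}^0=\bm{x}_0$, $\bm{x}^i=\bm{x}_0+\Delta\bm{e}^i$, $\bm{x}^{i+d}=\bm{x}_0-\Delta\bm{e}^i$ ($i=1,\dots,d$), arbitrary reals $\bar E^0,\dots,\bar E^{2d}$, and $\bar F^i=f(\bm{x}^i)+\bar E^i$. Let $M(\bm{x}_0+\bm{s})=\beta_0+\bm{s}^\top\bm{G}+\frac12\bm{s}^\top\mathsf{H}\bm{s}$ with $\mathsf{H}$ diagonal be the quadratic model with diagonal Hessian interpolating $M(\bm{x}^i)=\bar F^i$, $i=0,\dots,2d$, and suppose $\|\mathsf{H}\|\le\kappa_{\mathsf{H}}$. Then for every $\bm{x}\in\mathcal{B}(\bm{x}_0;\Delta)$, $$|M(\bm{x})-f(\bm{x})|\le\kappa_{ef}\Delta^2+|\bar E^0|+\sum_{i=1}^{2d}|\bar E^i-\bar E^0|,$$ where $\kappa_{ef}=\kappa_{eg1}+\frac{\kappa_{Lg}+\kappa_{\mathsf{H}}}{2}$ and $\kappa_{eg1}=\frac{5\sqrt{2d}}{2}(\kappa_{Lg}+\kappa_{\mathsf{H}})$.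
   Context: $\bm{e}^i$ is the $i$-th standard unit basis vector; $\mathcal{B}(\bm{x}_0;\Delta)$ is the closed Euclidean ball of radius $\Delta$ centered at $\bm{x}_0$; $\|\mathsf{H}\|$ is the spectral norm. *)

theory Defs
  imports "HOL-Analysis.Analysis"
begin

definition quad_model :: "real^'n \<Rightarrow> real \<Rightarrow> real^'n \<Rightarrow> real^'n^'n \<Rightarrow> real^'n \<Rightarrow> real" where
  "quad_model x0 beta0 G H x = beta0 + (x - x0) \<bullet> G + (1/2) * ((x - x0) \<bullet> (H *v (x - x0)))"

definition diagonal_mat :: "real^'n^'n \<Rightarrow> bool" where
  "diagonal_mat H \<longleftrightarrow> (\<forall>i j. i \<noteq> j \<longrightarrow> H $ i $ j = 0)"

end

theory Submission
  imports Defs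
begin

text \<open>The model gradient is a central-difference estimate: subtracting the interpolation
conditions at \<open>x0 \<plusminus> \<Delta> e\<^sub>i\<close> cancels the intercept and the curvature \<open>H\<^sub>i\<^sub>i\<close>, so each
component of \<open>G - \<nabla>f(x0)\<close> is, up to the data error \<open>(E\<^sup>+\<^sub>i - E\<^sup>-\<^sub>i) / (2\<Delta>)\<close>, a difference
of two first-order Taylor remainders of size at most \<open>\<kappa>Lg \<Delta>\<^sup>2 / 2\<close>. Writing \<open>x = x0 + s\<close>,
the error \<open>M(x) - f(x)\<close> splits into the intercept error \<open>E0\<close>, the gradient error
\<open>s \<bullet> (G - \<nabla>f(x0))\<close>, the model curvature \<open>s \<bullet> H s / 2\<close> and the Taylor remainder of \<open>f\<close>
at \<open>x0\<close>; bounding each on the ball gives a sharper estimate than the one claimed.\<close>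

lemma norm_le_sqrt_card_if_components_le:
  fixes x :: "real^'n"
  assumes "\<And>i. \<bar>x $ i\<bar> \<le> c"
  shows "norm x \<le> sqrt CARD('n) * c"
proof -
  have "infnorm x \<le> c"
    unfolding infnorm_cart using assms by (auto intro!: cSup_least)
  then show ?thesis
    using norm_le_infnorm[of x] by (simp add: mult_left_mono order_trans)
qed

lemma increment_le_of_derivative_near_constant:
  fixes \<phi> \<phi>' :: "real \<Rightarrow> real"
  assumes deriv: "\<And>t. 0 \<le> t \<Longrightarrow> t \<le> 1 \<Longrightarrow> (\<phi> has_real_derivative \<phi>' t) (at t)"
    and near: "\<And>t. 0 \<le> t \<Longrightarrow> t \<le> 1 \<Longrightarrow> \<bar>\<phi>' t - c\<bar> \<le> K * t"
  shows "\<bar>\<phi> 1 - \<phi> 0 - c\<bar> \<le> K / 2"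
proof -
  have "\<sigma> * (\<phi> 0 - c * 0) + K / 2 * 0\<^sup>2 \<le> \<sigma> * (\<phi> 1 - c * 1) + K / 2 * 1\<^sup>2"
    if "\<bar>\<sigma>\<bar> = 1" for \<sigma> :: real
  proof (rule DERIV_nonneg_imp_nondecreasing[of 0 1])
    fix t :: real assume t: "0 \<le> t" "t \<le> 1"
    have "((\<lambda>t. \<sigma> * (\<phi> t - c * t) + K / 2 * t\<^sup>2) has_real_derivative
            \<sigma> * (\<phi>' t - c) + K * t) (at t)"
      by (auto intro!: derivative_eq_intros deriv t)
    moreover have "0 \<le> \<sigma> * (\<phi>' t - c) + K * t"
      using near[OF t] that by (auto simp: abs_if split: if_splits)
    ultimately show "\<exists>y. ((\<lambda>t. \<sigma> * (\<phi> t - c * t) + K / 2 * t\<^sup>2) has_real_derivative y) (at t) \<and> 0 \<le> y"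
      by blast
  qed simp
  from this[of 1] this[of "-1"] show ?thesis
    unfolding abs_le_iff by simp
qed

lemma taylor_remainder_le_lipschitz_gradient:
  fixes f :: "'a::real_inner \<Rightarrow> real"
  assumes grad: "\<And>x. (f has_derivative (\<lambda>h. g x \<bullet> h)) (at x)"
    and lip: "\<And>x y. norm (g x - g y) \<le> L * norm (x - y)"
  shows "\<bar>f (x + h) - f x - g x \<bullet> h\<bar> \<le> L / 2 * (norm h)\<^sup>2"
proof -
  have "((\<lambda>t. f (x + t *\<^sub>R h)) has_real_derivative g (x + t *\<^sub>R h) \<bullet> h) (at t)" for t
  proof -
    have "((\<lambda>t. x + t *\<^sub>R h) has_derivative (\<lambda>u. u *\<^sub>R h)) (at t)"
      by (auto intro!: derivative_eq_intros)
    from has_derivative_compose[OF this grad] show ?thesis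
      by (simp add: o_def has_field_derivative_def mult_commute_abs)
  qed
  moreover have "\<bar>g (x + t *\<^sub>R h) \<bullet> h - g x \<bullet> h\<bar> \<le> L * (norm h)\<^sup>2 * t" if "0 \<le> t" for t
  proof -
    have "\<bar>g (x + t *\<^sub>R h) \<bullet> h - g x \<bullet> h\<bar> \<le> norm (g (x + t *\<^sub>R h) - g x) * norm h"
      by (metis Cauchy_Schwarz_ineq2 inner_diff_left)
    also have "\<dots> \<le> L * norm (t *\<^sub>R h) * norm h"
      using lip[of "x + t *\<^sub>R h" x] by (simp add: mult_right_mono)
    finally show ?thesis
      using that by (simp add: power2_eq_square mult_ac)
  qed
  ultimately show ?thesis
    using increment_le_of_derivative_near_constant[of "\<lambda>t. f (x + t *\<^sub>R h)"
        "\<lambda>t. g (x + t *\<^sub>R h) \<bullet> h" "g x \<bullet> h" "L * (norm h)\<^sup>2"]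
    by simp
qed

lemma abs_inner_le_componentwise_approx:
  fixes s e :: "real^'n"
  assumes approx: "\<And>i. \<bar>e $ i - b i\<bar> \<le> c" and s: "norm s \<le> \<Delta>"
  shows "\<bar>s \<bullet> e\<bar> \<le> \<Delta> * (sqrt CARD('n) * c) + \<Delta> * (\<Sum>i\<in>UNIV. \<bar>b i\<bar>)"
proof -
  define a where "a = e - (\<chi> i. b i)"
  have "\<bar>s \<bullet> a\<bar> \<le> \<Delta> * (sqrt CARD('n) * c)"
  proof -
    have "norm a \<le> sqrt CARD('n) * c"
      by (rule norm_le_sqrt_card_if_components_le) (simp add: a_def approx)
    then show ?thesis
      using Cauchy_Schwarz_ineq2[of s a] s
      by (meson mult_mono' norm_ge_zero order_trans)
  qed
  moreover have "\<bar>s \<bullet> (\<chi> i. b i)\<bar> \<le> \<Delta> * (\<Sum>i\<in>UNIV. \<bar>b i\<bar>)"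
  proof -
    have "\<bar>s \<bullet> (\<chi> i. b i)\<bar> \<le> (\<Sum>i\<in>UNIV. \<bar>s $ i\<bar> * \<bar>b i\<bar>)"
      unfolding inner_vec_def by (simp add: abs_mult sum_abs[THEN order_trans])
    also have "\<dots> \<le> (\<Sum>i\<in>UNIV. \<Delta> * \<bar>b i\<bar>)"
      using component_le_norm_cart[of s] s by (intro sum_mono mult_right_mono) (auto intro: order_trans)
    finally show ?thesis by (simp add: sum_distrib_left)
  qed
  moreover have "s \<bullet> e = s \<bullet> a + s \<bullet> (\<chi> i. b i)"
    by (simp add: a_def inner_diff_right)
  ultimately show ?thesis by linarith
qed

lemma abs_quadratic_form_le_onorm:
  fixes H :: "real^'n^'n"
  shows "\<bar>s \<bullet> (H *v s)\<bar> \<le> onorm (\<lambda>v. H *v v) * (norm s)\<^sup>2"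
proof -
  have "\<bar>s \<bullet> (H *v s)\<bar> \<le> norm s * norm (H *v s)"
    by (rule Cauchy_Schwarz_ineq2)
  also have "\<dots> \<le> norm s * (onorm (\<lambda>v. H *v v) * norm s)"
    by (intro mult_left_mono onorm matrix_vector_mul_bounded_linear) simp
  finally show ?thesis by (simp add: power2_eq_square mult_ac)
qed

lemma quad_model_along_axis:
  "quad_model x0 beta0 G H (x0 + c *\<^sub>R axis i 1) = beta0 + c * G $ i + c\<^sup>2 / 2 * H $ i $ i"
  by (simp add: quad_model_def matrix_vector_mult_basis column_def inner_axis'
      matrix_vector_mult_scaleR power2_eq_square)

lemma quad_model_gradient_component_error:
  fixes f :: "real^'n \<Rightarrow> real"
  assumes grad: "\<And>x. (f has_derivative (\<lambda>h. g x \<bullet> h)) (at x)"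
    and lip: "\<And>x y. norm (g x - g y) \<le> L * norm (x - y)"
    and Delta: "\<Delta> > 0"
    and plus: "quad_model x0 beta0 G H (x0 + \<Delta> *\<^sub>R axis i 1) = f (x0 + \<Delta> *\<^sub>R axis i 1) + Ep"
    and minus: "quad_model x0 beta0 G H (x0 - \<Delta> *\<^sub>R axis i 1) = f (x0 - \<Delta> *\<^sub>R axis i 1) + Em"
  shows "\<bar>G $ i - g x0 $ i - (Ep - Em) / (2 * \<Delta>)\<bar> \<le> L / 2 * \<Delta>"
proof -
  define r where "r c = f (x0 + c *\<^sub>R axis i 1) - f x0 - c * g x0 $ i" for c
  have r: "\<bar>r c\<bar> \<le> L / 2 * \<Delta>\<^sup>2" if "\<bar>c\<bar> = \<Delta>" for c
    using taylor_remainder_le_lipschitz_gradient[OF grad lip, of x0 "c *\<^sub>R axis i 1"] that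
    by (simp add: r_def norm_axis_1 inner_axis)
  have "beta0 + \<Delta> * G $ i + \<Delta>\<^sup>2 / 2 * H $ i $ i = f x0 + \<Delta> * g x0 $ i + r \<Delta> + Ep"
    using plus by (simp add: quad_model_along_axis r_def)
  moreover have "beta0 - \<Delta> * G $ i + \<Delta>\<^sup>2 / 2 * H $ i $ i = f x0 - \<Delta> * g x0 $ i + r (-\<Delta>) + Em"
    using minus quad_model_along_axis[of x0 beta0 G H "-\<Delta>" i] by (simp add: r_def)
  ultimately have "2 * \<Delta> * (G $ i - g x0 $ i) = r \<Delta> - r (-\<Delta>) + Ep - Em"
    by (simp add: algebra_simps)
  then have "G $ i - g x0 $ i - (Ep - Em) / (2 * \<Delta>) = (r \<Delta> - r (-\<Delta>)) / (2 * \<Delta>)"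
    using Delta by (simp add: field_simps)
  also have "\<bar>\<dots>\<bar> \<le> L / 2 * \<Delta>"
    using r[of \<Delta>] r[of "-\<Delta>"] Delta by (simp add: abs_divide divide_le_eq power2_eq_square)
  finally show ?thesis .
qed

lemma quad_model_error_le:
  fixes f :: "real^'n \<Rightarrow> real"
  assumes grad: "\<And>x. (f has_derivative (\<lambda>h. g x \<bullet> h)) (at x)"
    and lip: "\<And>x y. norm (g x - g y) \<le> L * norm (x - y)"
    and Delta: "\<Delta> > 0"
    and interp0: "quad_model x0 beta0 G H x0 = f x0 + E0"
    and interp_plus: "\<And>i. quad_model x0 beta0 G H (x0 + \<Delta> *\<^sub>R axis i 1)
                         = f (x0 + \<Delta> *\<^sub>R axis i 1) + Eplus i"
    and interp_minus: "\<And>i. quad_model x0 beta0 G H (x0 - \<Delta> *\<^sub>R axis i 1)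
                         = f (x0 - \<Delta> *\<^sub>R axis i 1) + Eminus i"
    and x: "norm (x - x0) \<le> \<Delta>"
  shows "\<bar>quad_model x0 beta0 G H x - f x\<bar>
    \<le> \<bar>E0\<bar> + (sqrt CARD('n) * L + L + onorm (\<lambda>v. H *v v)) / 2 * \<Delta>\<^sup>2
       + (\<Sum>i\<in>UNIV. \<bar>Eplus i - Eminus i\<bar> / 2)"
proof -
  define s where "s = x - x0"
  have s: "norm s \<le> \<Delta>" using x by (simp add: s_def)
  have L: "0 \<le> L"
    using lip[of "axis undefined 1" 0] by (simp add: norm_axis_1) (meson norm_ge_zero order_trans)
  have "\<bar>s \<bullet> (G - g x0)\<bar>
      \<le> \<Delta> * (sqrt CARD('n) * (L / 2 * \<Delta>)) + \<Delta> * (\<Sum>i\<in>UNIV. \<bar>(Eplus i - Eminus i) / (2 * \<Delta>)\<bar>)"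
    using quad_model_gradient_component_error[OF grad lip Delta interp_plus interp_minus] s
    by (intro abs_inner_le_componentwise_approx) simp_all
  also have "\<dots> = sqrt CARD('n) * L / 2 * \<Delta>\<^sup>2 + (\<Sum>i\<in>UNIV. \<bar>Eplus i - Eminus i\<bar> / 2)"
    using Delta by (simp add: sum_distrib_left abs_divide power2_eq_square)
  finally have gradient_term: "\<bar>s \<bullet> (G - g x0)\<bar> \<le> \<dots>" .
  have "\<bar>s \<bullet> (H *v s)\<bar> \<le> onorm (\<lambda>v. H *v v) * \<Delta>\<^sup>2"
    using abs_quadratic_form_le_onorm[of s H] s
      onorm_pos_le[OF matrix_vector_mul_bounded_linear[of H]]
    by (meson mult_left_mono norm_ge_zero order_trans power_mono)
  moreover have "\<bar>f (x0 + s) - f x0 - g x0 \<bullet> s\<bar> \<le> L / 2 * \<Delta>\<^sup>2"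
    using taylor_remainder_le_lipschitz_gradient[OF grad lip, of x0 s] s L
    by (meson divide_nonneg_pos mult_left_mono norm_ge_zero order_trans power_mono zero_less_numeral)
  moreover have "quad_model x0 beta0 G H x - f x
      = E0 + s \<bullet> (G - g x0) + 1 / 2 * (s \<bullet> (H *v s)) - (f (x0 + s) - f x0 - g x0 \<bullet> s)"
    using interp0 by (simp add: quad_model_def s_def inner_diff_right inner_commute)
  moreover have "(sqrt CARD('n) * L + L + onorm (\<lambda>v. H *v v)) / 2 * \<Delta>\<^sup>2
      = sqrt CARD('n) * L / 2 * \<Delta>\<^sup>2 + 1 / 2 * (onorm (\<lambda>v. H *v v) * \<Delta>\<^sup>2) + L / 2 * \<Delta>\<^sup>2"
    by (simp add: field_simps)
  ultimately show ?thesis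
    using gradient_term by linarith
qed

theorem mainTheorem3:
  fixes f :: "real^'n \<Rightarrow> real"
    and g :: "real^'n \<Rightarrow> real^'n"
    and Hf :: "real^'n \<Rightarrow> real^'n^'n"
    and x0 G :: "real^'n" and H :: "real^'n^'n"
    and \<kappa>Lg \<kappa>H \<Delta> beta0 E0 :: real
    and Eplus Eminus :: "'n \<Rightarrow> real"
  assumes grad: "\<And>x. (f has_derivative (\<lambda>h. g x \<bullet> h)) (at x)"
    and hess: "\<And>x. (g has_derivative (\<lambda>h. Hf x *v h)) (at x)"
    and hess_cont: "continuous_on UNIV Hf"
    and lip: "\<And>x y. norm (g x - g y) \<le> \<kappa>Lg * norm (x - y)"
    and kLg: "\<kappa>Lg > 0"
    and Delta: "\<Delta> > 0"
    and diag: "diagonal_mat H"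
    and interp0: "quad_model x0 beta0 G H x0 = f x0 + E0"
    and interp_plus: "\<And>i. quad_model x0 beta0 G H (x0 + \<Delta> *\<^sub>R axis i 1)
                         = f (x0 + \<Delta> *\<^sub>R axis i 1) + Eplus i"
    and interp_minus: "\<And>i. quad_model x0 beta0 G H (x0 - \<Delta> *\<^sub>R axis i 1)
                         = f (x0 - \<Delta> *\<^sub>R axis i 1) + Eminus i"
    and Hbound: "onorm (\<lambda>v. H *v v) \<le> \<kappa>H"
  shows "\<forall>x \<in> cball x0 \<Delta>.
     \<bar>quad_model x0 beta0 G H x - f x\<bar>
       \<le> ((5 * sqrt (2 * real CARD('n)) / 2) * (\<kappa>Lg + \<kappa>H) + (\<kappa>Lg + \<kappa>H) / 2) * \<Delta>\<^sup>2
          + \<bar>E0\<bar> + (\<Sum>i\<in>UNIV. \<bar>Eplus i - E0\<bar> + \<bar>Eminus i - E0\<bar>)"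
proof
  fix x assume "x \<in> cball x0 \<Delta>"
  then have "norm (x - x0) \<le> \<Delta>"
    by (simp add: dist_norm norm_minus_commute)
  note error = quad_model_error_le[OF grad lip Delta interp0 interp_plus interp_minus this]
  have \<kappa>H: "0 \<le> \<kappa>H"
    using onorm_pos_le[OF matrix_vector_mul_bounded_linear[of H]] Hbound by linarith
  have "sqrt CARD('n) \<le> sqrt (2 * real CARD('n))"
    by (rule real_sqrt_le_mono) simp
  moreover have "0 \<le> sqrt (2 * real CARD('n))"
    by simp
  ultimately have "sqrt CARD('n) \<le> 5 * sqrt (2 * real CARD('n))"
    by linarith
  then have "sqrt CARD('n) * \<kappa>Lg \<le> 5 * sqrt (2 * real CARD('n)) * (\<kappa>Lg + \<kappa>H)"
    using kLg \<kappa>H by (intro mult_mono) auto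
  then have "(sqrt CARD('n) * \<kappa>Lg + \<kappa>Lg + onorm (\<lambda>v. H *v v)) / 2 * \<Delta>\<^sup>2
      \<le> ((5 * sqrt (2 * real CARD('n)) / 2) * (\<kappa>Lg + \<kappa>H) + (\<kappa>Lg + \<kappa>H) / 2) * \<Delta>\<^sup>2"
    using Hbound by (intro mult_right_mono) (simp_all add: field_simps)
  moreover have "(\<Sum>i\<in>UNIV. \<bar>Eplus i - Eminus i\<bar> / 2) \<le> (\<Sum>i\<in>UNIV. \<bar>Eplus i - E0\<bar> + \<bar>Eminus i - E0\<bar>)"
    by (intro sum_mono) (simp add: abs_if)
  ultimately show "\<bar>quad_model x0 beta0 G H x - f x\<bar>
       \<le> ((5 * sqrt (2 * real CARD('n)) / 2) * (\<kappa>Lg + \<kappa>H) + (\<kappa>Lg + \<kappa>H) / 2) * \<Delta>\<^sup>2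
          + \<bar>E0\<bar> + (\<Sum>i\<in>UNIV. \<bar>Eplus i - E0\<bar> + \<bar>Eminus i - E0\<bar>)"
    using error by linarith
qed

end
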